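(* Let $G_l$ be a graph of order $n_l$, maximum degree $\Delta_l$ and minimum degree $\delta_l$, $l\in\{1,2\}$. Then: (i) For $i,j\in\{1,2\}$ with $i\neq j$ and every integer $k\in\{\Delta_j-\Delta_i,\dots,\Delta_i+\Delta_j\}$, $\phi_k^d(G_1\times G_2)\ge n_j\,\phi_{k-\Delta_j}^d(G_i)$. (ii) For all integers $k_1\in\{1-\delta_1,\dots,\Delta_1\}$ and $k_2\in\{1-\delta_2,\dots,\Delta_2\}$, $$\phi_{k_1+k_2-1}^d(G_1\times G_2)\ge \phi_{k_1}^d(G_1)\phi_{k_2}^d(G_2)+\min\{n_1-\phi_{k_1}^d(G_1),\,n_2-\phi_{k_2}^d(G_2)\}.$$
   Context: All graphs are finite and simple. For a graph $G=(V,E)$, a set $S\subseteq V$ and $v\in V$, let $\delta_S(v)=|\{u\in S: uv\in E\}|$, $\delta(v)$ the degree of $v$, and $\overline{S}=V\setminus S$. For an integer $k$, a non-empty set $S\subseteq V$ is a defensive $k$-alliance if $\delta_S(v)\ge \delta_{\overline S}(v)+k$ for every $v\in S$. A set $X\subseteq V$ is a defensive $k$-alliance free set ($k$-daf set) if no defensive $k$-alliance $S$ satisfies $S\subseteq X$. $\phi_k^d(G)$ denotes the maximum cardinality of a $k$-daf set in $G$. The Cartesian product $G_1\times G_2$ of $G_1=(V_1,E_1)$, $G_2=(V_2,E_2)$ has vertex set $V_1\times V_2$, with $(a,b)$ adjacent to $(c,d)$ iff either $a=c$ and $bd\in E_2$, or $b=d$ and $ac\in E_1$. *)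

theory Defs
  imports Main
begin

definition graph :: "'a set \<Rightarrow> ('a \<times> 'a) set \<Rightarrow> bool" where
  "graph V E \<longleftrightarrow> finite V \<and> E \<subseteq> V \<times> V \<and> sym E \<and> irrefl E"

definition delta_in :: "('a \<times> 'a) set \<Rightarrow> 'a set \<Rightarrow> 'a \<Rightarrow> nat" where
  "delta_in E S v = card {u \<in> S. (u, v) \<in> E}"

definition degree :: "'a set \<Rightarrow> ('a \<times> 'a) set \<Rightarrow> 'a \<Rightarrow> nat" where
  "degree V E v = delta_in E V v"

definition max_degree :: "'a set \<Rightarrow> ('a \<times> 'a) set \<Rightarrow> nat" where
  "max_degree V E = Max (degree V E ` V)"

definition min_degree :: "'a set \<Rightarrow> ('a \<times> 'a) set \<Rightarrow> nat" where
  "min_degree V E = Min (degree V E ` V)"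

definition defensive_alliance :: "'a set \<Rightarrow> ('a \<times> 'a) set \<Rightarrow> int \<Rightarrow> 'a set \<Rightarrow> bool" where
  "defensive_alliance V E k S \<longleftrightarrow> S \<noteq> {} \<and> S \<subseteq> V \<and>
     (\<forall>v \<in> S. int (delta_in E S v) \<ge> int (delta_in E (V - S) v) + k)"

definition daf_set :: "'a set \<Rightarrow> ('a \<times> 'a) set \<Rightarrow> int \<Rightarrow> 'a set \<Rightarrow> bool" where
  "daf_set V E k X \<longleftrightarrow> X \<subseteq> V \<and> \<not> (\<exists>S. defensive_alliance V E k S \<and> S \<subseteq> X)"

definition phi_d :: "'a set \<Rightarrow> ('a \<times> 'a) set \<Rightarrow> int \<Rightarrow> nat" where
  "phi_d V E k = Max (card ` {X. daf_set V E k X})"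

definition cart_edges :: "'a set \<Rightarrow> ('a \<times> 'a) set \<Rightarrow> 'b set \<Rightarrow> ('b \<times> 'b) set
    \<Rightarrow> (('a \<times> 'b) \<times> ('a \<times> 'b)) set" where
  "cart_edges V1 E1 V2 E2 = {((a, b), (c, d)).
      (a = c \<and> a \<in> V1 \<and> (b, d) \<in> E2) \<or> (b = d \<and> b \<in> V2 \<and> (a, c) \<in> E1)}"

end

theory Submission imports Defs begin

(* Write margin_S(v) = \<delta>_S(v) - \<delta>_{V-S}(v), so that S is a defensive
   k-alliance iff it is a nonempty subset of V with margin_S(v) \<ge> k on S.  In the
   Cartesian product the margin of S at (a,b) is the sum of the margins, in G1 and G2,
   of the row fibre {c. (c,b) \<in> S} at a and the column fibre {d. (a,d) \<in> S} at b.
   Margins are monotone in S and bounded by the maximum degree; on a singleton {v}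
   the margin is -\<delta>(v).  From this:
   (i)  the projection of a k-alliance of G1 \<times> G2 to G1 is a (k - \<Delta>2)-alliance,
        hence X \<times> V2 is k-daf whenever X is (k - \<Delta>2)-daf in G1 (and symmetrically);
   (ii) X1 \<times> X2 is (k1 + k2 - 1)-daf when X_i is k_i-daf, and it stays daf after
        adding a "matching" D \<subseteq> (V1 - X1) \<times> (V2 - X2) (no two points in a common
        row or column), since every point of D is isolated in its row and column.
   Choosing maximum daf sets X_i and a matching of size min(n1 - |X1|, n2 - |X2|)
   gives the three lower bounds on phi_d, of which the corollary is an instance. *)

section \<open>Margins\<close>

definition margin :: "'a set \<Rightarrow> ('a \<times> 'a) set \<Rightarrow> 'a set \<Rightarrow> 'a \<Rightarrow> int" where
  "margin V E S v = int (delta_in E S v) - int (delta_in E (V - S) v)"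

lemma defensive_alliance_margin:
  "defensive_alliance V E k S \<longleftrightarrow> S \<noteq> {} \<and> S \<subseteq> V \<and> (\<forall>v\<in>S. k \<le> margin V E S v)"
  unfolding defensive_alliance_def margin_def by auto

lemma daf_set_low_margin:
  assumes "daf_set V E k X" "P \<subseteq> X" "P \<noteq> {}"
  shows "\<exists>v\<in>P. margin V E P v < k"
proof -
  have "P \<subseteq> V" "\<not> defensive_alliance V E k P" using assms(1,2) by (auto simp: daf_set_def)
  then show ?thesis using assms(3) unfolding defensive_alliance_margin by (auto simp: not_le)
qed

lemma delta_in_mono:
  assumes "graph V E" "T \<subseteq> P" "P \<subseteq> V"
  shows "delta_in E T v \<le> delta_in E P v"
proof -
  have "finite {u\<in>P. (u, v) \<in> E}"
    using assms(1,3) by (auto simp: graph_def intro: finite_subset)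
  then show ?thesis
    unfolding delta_in_def using assms(2) by (intro card_mono) blast+
qed

lemma margin_mono:
  assumes g: "graph V E" and "T \<subseteq> P" "P \<subseteq> V"
  shows "margin V E T v \<le> margin V E P v"
proof -
  have "delta_in E T v \<le> delta_in E P v" using delta_in_mono[OF assms] .
  moreover have "delta_in E (V - P) v \<le> delta_in E (V - T) v"
    using assms by (intro delta_in_mono[OF g]) auto
  ultimately show ?thesis unfolding margin_def by linarith
qed

lemma margin_le_max_degree:
  assumes g: "graph V E" and "T \<subseteq> V" "v \<in> V"
  shows "margin V E T v \<le> int (max_degree V E)"
proof -
  have "delta_in E T v \<le> degree V E v"
    unfolding degree_def using assms by (intro delta_in_mono[OF g]) auto
  also have "\<dots> \<le> max_degree V E"
    unfolding max_degree_def using assms by (intro Max_ge) (auto simp: graph_def)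
  finally show ?thesis unfolding margin_def by linarith
qed

lemma margin_singleton:
  assumes g: "graph V E" and "T \<subseteq> {v}" and "v \<in> V"
  shows "margin V E T v \<le> - int (min_degree V E)"
proof -
  have irr: "(v, v) \<notin> E" using g by (auto simp: graph_def irrefl_def)
  have "{u\<in>T. (u, v) \<in> E} = {}" using assms(2) irr by auto
  then have "delta_in E T v = 0" unfolding delta_in_def by (simp only: card.empty)
  moreover have "{u\<in>V - T. (u, v) \<in> E} = {u\<in>V. (u, v) \<in> E}" using assms(2) irr by auto
  then have "delta_in E (V - T) v = degree V E v" unfolding delta_in_def degree_def by simp
  moreover have "min_degree V E \<le> degree V E v"
    unfolding min_degree_def using assms by (intro Min_le) (auto simp: graph_def)
  ultimately show ?thesis unfolding margin_def by simp
qed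

section \<open>The Cartesian product\<close>

lemma graph_cart_product:
  assumes "graph V1 E1" "graph V2 E2"
  shows "graph (V1 \<times> V2) (cart_edges V1 E1 V2 E2)"
  using assms unfolding graph_def cart_edges_def sym_def irrefl_def by auto

lemma delta_in_cart_product:
  assumes g1: "graph V1 E1" and g2: "graph V2 E2" and a: "a \<in> V1" and b: "b \<in> V2"
    and S: "S \<subseteq> V1 \<times> V2"
  shows "delta_in (cart_edges V1 E1 V2 E2) S (a, b)
       = delta_in E1 {c. (c, b) \<in> S} a + delta_in E2 {d. (a, d) \<in> S} b"
proof -
  let ?R = "{c\<in>{c. (c, b) \<in> S}. (c, a) \<in> E1}" and ?C = "{d\<in>{d. (a, d) \<in> S}. (d, b) \<in> E2}"
  have split: "{u\<in>S. (u, (a, b)) \<in> cart_edges V1 E1 V2 E2} = (\<lambda>c. (c, b)) ` ?R \<union> (\<lambda>d. (a, d)) ` ?C"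
    using a b S by (auto simp: cart_edges_def)
  have "(a, a) \<notin> E1" using g1 by (auto simp: graph_def irrefl_def)
  then have disj: "(\<lambda>c. (c, b)) ` ?R \<inter> (\<lambda>d. (a, d)) ` ?C = {}" by auto
  have "finite ?R" "finite ?C"
    using S g1 g2 by (auto simp: graph_def intro: finite_subset)
  then have "card ((\<lambda>c. (c, b)) ` ?R \<union> (\<lambda>d. (a, d)) ` ?C) = card ?R + card ?C"
    using disj by (simp add: card_Un_disjoint card_image inj_on_def)
  then show ?thesis unfolding delta_in_def split by simp
qed

lemma margin_cart_product:
  assumes g1: "graph V1 E1" and g2: "graph V2 E2" and a: "a \<in> V1" and b: "b \<in> V2"
    and S: "S \<subseteq> V1 \<times> V2"
  shows "margin (V1 \<times> V2) (cart_edges V1 E1 V2 E2) S (a, b)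
       = margin V1 E1 {c. (c, b) \<in> S} a + margin V2 E2 {d. (a, d) \<in> S} b"
proof -
  have "{c. (c, b) \<in> V1 \<times> V2 - S} = V1 - {c. (c, b) \<in> S}"
       "{d. (a, d) \<in> V1 \<times> V2 - S} = V2 - {d. (a, d) \<in> S}" using a b by auto
  then show ?thesis
    using delta_in_cart_product[OF g1 g2 a b S] delta_in_cart_product[OF g1 g2 a b, of "V1 \<times> V2 - S"]
    unfolding margin_def by auto
qed

lemma alliance_project_fst:
  assumes g1: "graph V1 E1" and g2: "graph V2 E2"
    and al: "defensive_alliance (V1 \<times> V2) (cart_edges V1 E1 V2 E2) k S"
  shows "defensive_alliance V1 E1 (k - int (max_degree V2 E2)) (fst ` S)"
  unfolding defensive_alliance_margin
proof (intro conjI ballI)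
  have S: "S \<noteq> {}" "S \<subseteq> V1 \<times> V2" using al by (auto simp: defensive_alliance_margin)
  then show "fst ` S \<noteq> {}" "fst ` S \<subseteq> V1" by auto
  fix a assume "a \<in> fst ` S"
  then obtain b where ab: "(a, b) \<in> S" by force
  with S have a: "a \<in> V1" and b: "b \<in> V2" by auto
  have "k \<le> margin V1 E1 {c. (c, b) \<in> S} a + margin V2 E2 {d. (a, d) \<in> S} b"
    using al ab margin_cart_product[OF g1 g2 a b S(2)] by (auto simp: defensive_alliance_margin)
  moreover have "margin V1 E1 {c. (c, b) \<in> S} a \<le> margin V1 E1 (fst ` S) a"
    using S by (intro margin_mono[OF g1]) force+
  moreover have "margin V2 E2 {d. (a, d) \<in> S} b \<le> int (max_degree V2 E2)"
    using S b by (intro margin_le_max_degree[OF g2]) auto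
  ultimately show "k - int (max_degree V2 E2) \<le> margin V1 E1 (fst ` S) a" by linarith
qed

lemma alliance_project_snd:
  assumes g1: "graph V1 E1" and g2: "graph V2 E2"
    and al: "defensive_alliance (V1 \<times> V2) (cart_edges V1 E1 V2 E2) k S"
  shows "defensive_alliance V2 E2 (k - int (max_degree V1 E1)) (snd ` S)"
  unfolding defensive_alliance_margin
proof (intro conjI ballI)
  have S: "S \<noteq> {}" "S \<subseteq> V1 \<times> V2" using al by (auto simp: defensive_alliance_margin)
  then show "snd ` S \<noteq> {}" "snd ` S \<subseteq> V2" by auto
  fix b assume "b \<in> snd ` S"
  then obtain a where ab: "(a, b) \<in> S" by force
  with S have a: "a \<in> V1" and b: "b \<in> V2" by auto
  have "k \<le> margin V1 E1 {c. (c, b) \<in> S} a + margin V2 E2 {d. (a, d) \<in> S} b"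
    using al ab margin_cart_product[OF g1 g2 a b S(2)] by (auto simp: defensive_alliance_margin)
  moreover have "margin V2 E2 {d. (a, d) \<in> S} b \<le> margin V2 E2 (snd ` S) b"
    using S by (intro margin_mono[OF g2]) force+
  moreover have "margin V1 E1 {c. (c, b) \<in> S} a \<le> int (max_degree V1 E1)"
    using S a by (intro margin_le_max_degree[OF g1]) auto
  ultimately show "k - int (max_degree V1 E1) \<le> margin V2 E2 (snd ` S) b" by linarith
qed

section \<open>Alliance-free sets in the product\<close>

lemma daf_set_times_right:
  assumes g1: "graph V1 E1" and g2: "graph V2 E2"
    and X: "daf_set V1 E1 (k - int (max_degree V2 E2)) X"
  shows "daf_set (V1 \<times> V2) (cart_edges V1 E1 V2 E2) k (X \<times> V2)"
  unfolding daf_set_def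
proof (intro conjI notI)
  show "X \<times> V2 \<subseteq> V1 \<times> V2" using X by (auto simp: daf_set_def)
  assume "\<exists>S. defensive_alliance (V1 \<times> V2) (cart_edges V1 E1 V2 E2) k S \<and> S \<subseteq> X \<times> V2"
  then obtain S where "defensive_alliance (V1 \<times> V2) (cart_edges V1 E1 V2 E2) k S" "fst ` S \<subseteq> X"
    by fastforce
  then show False using X alliance_project_fst[OF g1 g2] unfolding daf_set_def by blast
qed

lemma daf_set_times_left:
  assumes g1: "graph V1 E1" and g2: "graph V2 E2"
    and X: "daf_set V2 E2 (k - int (max_degree V1 E1)) X"
  shows "daf_set (V1 \<times> V2) (cart_edges V1 E1 V2 E2) k (V1 \<times> X)"
  unfolding daf_set_def
proof (intro conjI notI)
  show "V1 \<times> X \<subseteq> V1 \<times> V2" using X by (auto simp: daf_set_def)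
  assume "\<exists>S. defensive_alliance (V1 \<times> V2) (cart_edges V1 E1 V2 E2) k S \<and> S \<subseteq> V1 \<times> X"
  then obtain S where "defensive_alliance (V1 \<times> V2) (cart_edges V1 E1 V2 E2) k S" "snd ` S \<subseteq> X"
    by fastforce
  then show False using X alliance_project_snd[OF g1 g2] unfolding daf_set_def by blast
qed

text \<open>The product of a k1-daf set and a k2-daf set is (k1 + k2 - 1)-daf: a vertex a of low
  margin in the first projection forces the column of a in S to be a k2-alliance.\<close>
lemma daf_set_times:
  assumes g1: "graph V1 E1" and g2: "graph V2 E2"
    and X1: "daf_set V1 E1 k1 X1" and X2: "daf_set V2 E2 k2 X2"
  shows "daf_set (V1 \<times> V2) (cart_edges V1 E1 V2 E2) (k1 + k2 - 1) (X1 \<times> X2)"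
  unfolding daf_set_def
proof (intro conjI notI)
  have XV: "X1 \<subseteq> V1" "X2 \<subseteq> V2" using X1 X2 by (auto simp: daf_set_def)
  then show "X1 \<times> X2 \<subseteq> V1 \<times> V2" by auto
  assume "\<exists>S. defensive_alliance (V1 \<times> V2) (cart_edges V1 E1 V2 E2) (k1 + k2 - 1) S \<and> S \<subseteq> X1 \<times> X2"
  then obtain S where al: "defensive_alliance (V1 \<times> V2) (cart_edges V1 E1 V2 E2) (k1 + k2 - 1) S"
    and sub: "S \<subseteq> X1 \<times> X2" by blast
  have "fst ` S \<noteq> {}" using al by (auto simp: defensive_alliance_def)
  moreover have "fst ` S \<subseteq> X1" using sub by auto
  ultimately obtain a where a: "a \<in> fst ` S" and low: "margin V1 E1 (fst ` S) a < k1"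
    using daf_set_low_margin[OF X1] by blast
  let ?T = "{d. (a, d) \<in> S}"
  have TX: "?T \<subseteq> X2" using sub by auto
  have "defensive_alliance V2 E2 k2 ?T"
    unfolding defensive_alliance_margin
  proof (intro conjI ballI)
    show "?T \<noteq> {}" using a by force
    show "?T \<subseteq> V2" using TX XV by auto
    fix b assume "b \<in> ?T"
    then have ab: "(a, b) \<in> S" by simp
    have SV: "S \<subseteq> V1 \<times> V2" using sub XV by blast
    then have "a \<in> V1" "b \<in> V2" using ab by auto
    then have "margin (V1 \<times> V2) (cart_edges V1 E1 V2 E2) S (a, b)
        = margin V1 E1 {c. (c, b) \<in> S} a + margin V2 E2 ?T b"
      using margin_cart_product[OF g1 g2 _ _ SV] by blast
    moreover have "k1 + k2 - 1 \<le> margin (V1 \<times> V2) (cart_edges V1 E1 V2 E2) S (a, b)"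
      using al ab by (simp add: defensive_alliance_margin)
    moreover have "margin V1 E1 {c. (c, b) \<in> S} a \<le> margin V1 E1 (fst ` S) a"
      using SV by (intro margin_mono[OF g1]) force+
    ultimately show "k2 \<le> margin V2 E2 ?T b" using low by linarith
  qed
  then show False using X2 TX unfolding daf_set_def by blast
qed

definition matching_set :: "('a \<times> 'b) set \<Rightarrow> bool" where
  "matching_set D \<longleftrightarrow> (\<forall>p\<in>D. \<forall>q\<in>D. fst p = fst q \<or> snd p = snd q \<longrightarrow> p = q)"

text \<open>Adding a matching outside the rows and columns of X1 \<times> X2 preserves being daf, as
  long as k exceeds -\<delta>1 - \<delta>2: a point of the matching in S is alone in its row and column.\<close>
lemma daf_set_times_Un_matching:
  assumes g1: "graph V1 E1" and g2: "graph V2 E2"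
    and X: "daf_set (V1 \<times> V2) (cart_edges V1 E1 V2 E2) k (X1 \<times> X2)"
    and D: "matching_set D" "D \<subseteq> (V1 - X1) \<times> (V2 - X2)"
    and k: "- int (min_degree V1 E1) - int (min_degree V2 E2) < k"
  shows "daf_set (V1 \<times> V2) (cart_edges V1 E1 V2 E2) k (X1 \<times> X2 \<union> D)"
  unfolding daf_set_def
proof (intro conjI notI)
  show "X1 \<times> X2 \<union> D \<subseteq> V1 \<times> V2" using X D(2) by (auto simp: daf_set_def)
  assume "\<exists>S. defensive_alliance (V1 \<times> V2) (cart_edges V1 E1 V2 E2) k S \<and> S \<subseteq> X1 \<times> X2 \<union> D"
  then obtain S where al: "defensive_alliance (V1 \<times> V2) (cart_edges V1 E1 V2 E2) k S"
    and sub: "S \<subseteq> X1 \<times> X2 \<union> D" by blast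
  have "S \<inter> D = {}"
  proof (rule ccontr)
    assume "S \<inter> D \<noteq> {}"
    then obtain a b where ab: "(a, b) \<in> S" "(a, b) \<in> D" by auto
    have a: "a \<in> V1 - X1" and b: "b \<in> V2 - X2" using ab(2) D(2) by auto
    have row: "{c. (c, b) \<in> S} \<subseteq> {a}" and col: "{d. (a, d) \<in> S} \<subseteq> {b}"
      using sub ab(2) a b D(1) unfolding matching_set_def by fastforce+
    have "k \<le> margin V1 E1 {c. (c, b) \<in> S} a + margin V2 E2 {d. (a, d) \<in> S} b"
      using al ab(1) a b margin_cart_product[OF g1 g2, of a b S]
      by (auto simp: defensive_alliance_margin)
    then show False
      using margin_singleton[OF g1 row] margin_singleton[OF g2 col] a b k by auto
  qed
  then show False using X al sub unfolding daf_set_def by blast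
qed

lemma matching_set_exists:
  assumes "finite P" "finite Q" "m \<le> card P" "m \<le> card Q"
  shows "\<exists>D. matching_set D \<and> D \<subseteq> P \<times> Q \<and> card D = m"
proof -
  obtain A where A: "A \<subseteq> P" "card A = m" "finite A"
    using assms(3) by (rule obtain_subset_with_card_n)
  obtain B where B: "B \<subseteq> Q" "card B = m" "finite B"
    using assms(4) by (rule obtain_subset_with_card_n)
  obtain h where h: "bij_betw h A B"
    using finite_same_card_bij[OF A(3) B(3)] A(2) B(2) by auto
  then have inj: "inj_on h A" and hB: "h ` A \<subseteq> B" by (auto simp: bij_betw_def)
  let ?D = "(\<lambda>a. (a, h a)) ` A"
  have "matching_set ?D" using inj unfolding matching_set_def by (auto dest: inj_onD)
  moreover have "?D \<subseteq> P \<times> Q" using A(1) B(1) hB by auto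
  moreover have "card ?D = m" using A(2) by (simp add: card_image inj_on_def)
  ultimately show ?thesis by blast
qed

section \<open>Bounds on phi_d\<close>

lemma finite_daf_sets:
  assumes "graph V E"
  shows "finite {X. daf_set V E k X}"
  using assms by (auto simp: graph_def daf_set_def intro: finite_subset[of _ "Pow V"])

text \<open>phi_d is attained by some daf set (the empty set is always daf).\<close>
lemma phi_d_attained:
  assumes "graph V E"
  obtains X where "daf_set V E k X" "card X = phi_d V E k"
proof -
  have "{} \<in> {X. daf_set V E k X}" by (auto simp: daf_set_def defensive_alliance_def)
  then have "phi_d V E k \<in> card ` {X. daf_set V E k X}"
    unfolding phi_d_def using finite_daf_sets[OF assms] by (intro Max_in) auto
  then show ?thesis using that by auto
qed

lemma card_le_phi_d:
  assumes "graph V E" "daf_set V E k Y"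
  shows "card Y \<le> phi_d V E k"
  unfolding phi_d_def using finite_daf_sets[OF assms(1)] assms(2) by (intro Max_ge) auto

lemma phi_d_cart_product_right:
  assumes g1: "graph V1 E1" and g2: "graph V2 E2"
  shows "card V2 * phi_d V1 E1 (k - int (max_degree V2 E2))
           \<le> phi_d (V1 \<times> V2) (cart_edges V1 E1 V2 E2) k"
proof -
  obtain X where X: "daf_set V1 E1 (k - int (max_degree V2 E2)) X"
    "card X = phi_d V1 E1 (k - int (max_degree V2 E2))"
    using phi_d_attained[OF g1] by blast
  have "card (X \<times> V2) \<le> phi_d (V1 \<times> V2) (cart_edges V1 E1 V2 E2) k"
    using card_le_phi_d[OF graph_cart_product[OF g1 g2] daf_set_times_right[OF g1 g2 X(1)]] .
  then show ?thesis using X(2) by (simp add: card_cartesian_product mult.commute)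
qed

lemma phi_d_cart_product_left:
  assumes g1: "graph V1 E1" and g2: "graph V2 E2"
  shows "card V1 * phi_d V2 E2 (k - int (max_degree V1 E1))
           \<le> phi_d (V1 \<times> V2) (cart_edges V1 E1 V2 E2) k"
proof -
  obtain X where X: "daf_set V2 E2 (k - int (max_degree V1 E1)) X"
    "card X = phi_d V2 E2 (k - int (max_degree V1 E1))"
    using phi_d_attained[OF g2] by blast
  have "card (V1 \<times> X) \<le> phi_d (V1 \<times> V2) (cart_edges V1 E1 V2 E2) k"
    using card_le_phi_d[OF graph_cart_product[OF g1 g2] daf_set_times_left[OF g1 g2 X(1)]] .
  then show ?thesis using X(2) by (simp add: card_cartesian_product)
qed

lemma phi_d_cart_product_matching:
  assumes g1: "graph V1 E1" and g2: "graph V2 E2"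
    and k1: "1 - int (min_degree V1 E1) \<le> k1" and k2: "1 - int (min_degree V2 E2) \<le> k2"
  shows "phi_d V1 E1 k1 * phi_d V2 E2 k2 + min (card V1 - phi_d V1 E1 k1) (card V2 - phi_d V2 E2 k2)
           \<le> phi_d (V1 \<times> V2) (cart_edges V1 E1 V2 E2) (k1 + k2 - 1)"
proof -
  obtain X1 where X1: "daf_set V1 E1 k1 X1" "card X1 = phi_d V1 E1 k1"
    using phi_d_attained[OF g1] by blast
  obtain X2 where X2: "daf_set V2 E2 k2 X2" "card X2 = phi_d V2 E2 k2"
    using phi_d_attained[OF g2] by blast
  have XV: "X1 \<subseteq> V1" "X2 \<subseteq> V2" using X1 X2 by (auto simp: daf_set_def)
  have fin: "finite V1" "finite V2" using g1 g2 by (auto simp: graph_def)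
  then have fX: "finite X1" "finite X2" using XV finite_subset by auto
  have "card (V1 - X1) = card V1 - phi_d V1 E1 k1" "card (V2 - X2) = card V2 - phi_d V2 E2 k2"
    using card_Diff_subset[OF fX(1) XV(1)] card_Diff_subset[OF fX(2) XV(2)] X1(2) X2(2) by auto
  then obtain D where D: "matching_set D" "D \<subseteq> (V1 - X1) \<times> (V2 - X2)"
    "card D = min (card V1 - phi_d V1 E1 k1) (card V2 - phi_d V2 E2 k2)"
    using matching_set_exists[of "V1 - X1" "V2 - X2" "min (card V1 - phi_d V1 E1 k1) (card V2 - phi_d V2 E2 k2)"] fin
    by auto
  have "daf_set (V1 \<times> V2) (cart_edges V1 E1 V2 E2) (k1 + k2 - 1) (X1 \<times> X2 \<union> D)"
    using daf_set_times_Un_matching[OF g1 g2 daf_set_times[OF g1 g2 X1(1) X2(1)] D(1,2)] k1 k2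
    by linarith
  moreover have "card (X1 \<times> X2 \<union> D) = card X1 * card X2 + card D"
    using fX D(2) finite_subset[OF D(2)] fin
    by (subst card_Un_disjoint) (auto simp: card_cartesian_product)
  ultimately show ?thesis
    using card_le_phi_d[OF graph_cart_product[OF g1 g2]] X1(2) X2(2) D(3) by metis
qed

theorem corollary1:
  fixes V1 :: "'a set" and E1 :: "('a \<times> 'a) set"
    and V2 :: "'b set" and E2 :: "('b \<times> 'b) set"
  assumes "graph V1 E1" and "graph V2 E2" and "V1 \<noteq> {}" and "V2 \<noteq> {}"
  shows
    "(\<forall>k::int. int (max_degree V2 E2) - int (max_degree V1 E1) \<le> k
         \<and> k \<le> int (max_degree V1 E1) + int (max_degree V2 E2) \<longrightarrow>
       phi_d (V1 \<times> V2) (cart_edges V1 E1 V2 E2) k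
         \<ge> card V2 * phi_d V1 E1 (k - int (max_degree V2 E2)))
   \<and> (\<forall>k::int. int (max_degree V1 E1) - int (max_degree V2 E2) \<le> k
         \<and> k \<le> int (max_degree V2 E2) + int (max_degree V1 E1) \<longrightarrow>
       phi_d (V1 \<times> V2) (cart_edges V1 E1 V2 E2) k
         \<ge> card V1 * phi_d V2 E2 (k - int (max_degree V1 E1)))
   \<and> (\<forall>k1 k2::int. 1 - int (min_degree V1 E1) \<le> k1 \<and> k1 \<le> int (max_degree V1 E1)
         \<and> 1 - int (min_degree V2 E2) \<le> k2 \<and> k2 \<le> int (max_degree V2 E2) \<longrightarrow>
       phi_d (V1 \<times> V2) (cart_edges V1 E1 V2 E2) (k1 + k2 - 1)
         \<ge> phi_d V1 E1 k1 * phi_d V2 E2 k2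
            + min (card V1 - phi_d V1 E1 k1) (card V2 - phi_d V2 E2 k2))"
  using phi_d_cart_product_right[OF assms(1,2)] phi_d_cart_product_left[OF assms(1,2)]
    phi_d_cart_product_matching[OF assms(1,2)] by blast

end
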